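(* Let $s>0$ and let $\mathcal{G}=\{g_x\}_{x\in\mathbb{Z}}$ be an $\mathcal{A}^1_s$-self-localized frame for the separable Hilbert space $\mathcal{H}$ with canonical dual frame $\tilde{\mathcal{G}}=\{\tilde g_x\}_{x\in\mathbb{Z}}$. Let $\mathcal{F}=\{f_n\}_{n\in\mathbb{Z}}$ be a frame for $\mathcal{H}$ with frame bounds $A,B$, and let $\mathcal{E}=\{e_n\}_{n\in\mathbb{Z}}\subset\mathcal{H}$ satisfy $$\|A(\mathcal{E}-\mathcal{F},\tilde{\mathcal{G}})\|_{\mathcal{A}^1}=\max\Big\{\sup_{n\in\mathbb{Z}}\sum_{x\in\mathbb{Z}}|\langle e_n-f_n,\tilde g_x\rangle|,\ \sup_{x\in\mathbb{Z}}\sum_{n\in\mathbb{Z}}|\langle e_n-f_n,\tilde g_x\rangle|\Big\}\le\varepsilon$$ with $0<\varepsilon<\left(\sqrt{A^{-1}\|A(\mathcal{G},\mathcal{G})\|_{\mathcal{A}^1}}\right)^{-1}$. Then $\mathcal{E}$ is a frame for $\mathcal{H}$ with lower frame bound $A\left(1-\sqrt{A^{-1}\|A(\mathcal{G},\mathcal{G})\|_{\mathcal{A}^1}}\,\varepsilon\right)^2$ and upper frame bound $B\left(1+\sqrt{B^{-1}\|A(\mathcal{G},\mathcal{G})\|_{\mathcal{A}^1}}\,\varepsilon\right)^2$.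
   Context: A sequence $\{h_n\}_{n\in\mathbb{Z}}$ in a separable Hilbert space $\mathcal{H}$ is a frame with bounds $0<A\le B<\infty$ if $A\|f\|^2\le\sum_n|\langle f,h_n\rangle|^2\le B\|f\|^2$ for all $f\in\mathcal{H}$; its frame operator $Sf=\sum_n\langle f,h_n\rangle h_n$ is boundedly invertible and $\{S^{-1}h_n\}$ is the canonical dual frame. For $s\ge0$, $v_s(x)=(1+|x|)^s$, and the Schur algebra $\mathcal{A}^1_s$ is the set of matrices $M=(m_{kl})_{k,l\in\mathbb{Z}}$ with $\|M\|_{\mathcal{A}^1_s}:=\max\{\sup_k\sum_l|m_{kl}|v_s(k-l),\ \sup_l\sum_k|m_{kl}|v_s(k-l)\}<\infty$; $\mathcal{A}^1:=\mathcal{A}^1_0$. For sequences $\mathcal{G}=\{g_n\}$, $\mathcal{F}=\{f_x\}$ the Gramian $A(\mathcal{G},\mathcal{F})$ is the matrix with entries $\langle g_n,f_x\rangle$; $A(\mathcal{E}-\mathcal{F},\tilde{\mathcal{G}})$ denotes the matrix with entries $\langle e_n-f_n,\tilde g_x\rangle$. A frame $\mathcal{G}$ is $\mathcal{A}^1_s$-self-localized if $A(\mathcal{G},\mathcal{G})\in\mathcal{A}^1_s$. *)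

theory Defs
  imports "HOL-Analysis.Analysis"
begin

text \<open>HOL-Analysis only provides real inner product spaces,
  so we introduce a class of complex Hilbert spaces: a (real) Banach space equipped
  with a complex scalar multiplication compatible with the real one and a complex
  inner product (linear in the first, conjugate linear in the second argument)
  inducing the norm.\<close>

class complex_hilbert = banach +
  fixes scaleC :: "complex \<Rightarrow> 'a \<Rightarrow> 'a"
    and cinner :: "'a \<Rightarrow> 'a \<Rightarrow> complex"
  assumes scaleC_add_right: "scaleC a (x + y) = scaleC a x + scaleC a y"
    and scaleC_add_left: "scaleC (a + b) x = scaleC a x + scaleC b x"
    and scaleC_scaleC: "scaleC a (scaleC b x) = scaleC (a * b) x"
    and scaleC_one: "scaleC 1 x = x"
    and scaleR_scaleC: "scaleR r x = scaleC (complex_of_real r) x"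
    and cinner_commute: "cinner x y = cnj (cinner y x)"
    and cinner_add_left: "cinner (x + y) z = cinner x z + cinner y z"
    and cinner_scaleC_left: "cinner (scaleC a x) y = a * cinner x y"
    and cinner_self_real: "Im (cinner x x) = 0"
    and cinner_self_nonneg: "0 \<le> Re (cinner x x)"
    and cinner_self_eq_0: "cinner x x = 0 \<longleftrightarrow> x = 0"
    and norm_eq_sqrt_cinner: "norm x = sqrt (Re (cinner x x))"

definition frame_bounds :: "(int \<Rightarrow> 'a::complex_hilbert) \<Rightarrow> real \<Rightarrow> real \<Rightarrow> bool" where
  "frame_bounds h A B \<longleftrightarrow> 0 < A \<and> A \<le> B \<and>
     (\<forall>f. (\<lambda>n. (cmod (cinner f (h n)))\<^sup>2) summable_on UNIV \<and>
          A * (norm f)\<^sup>2 \<le> (\<Sum>\<^sub>\<infinity>n. (cmod (cinner f (h n)))\<^sup>2) \<and>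
          (\<Sum>\<^sub>\<infinity>n. (cmod (cinner f (h n)))\<^sup>2) \<le> B * (norm f)\<^sup>2)"

definition is_frame :: "(int \<Rightarrow> 'a::complex_hilbert) \<Rightarrow> bool" where
  "is_frame h \<longleftrightarrow> (\<exists>A B. frame_bounds h A B)"

definition frame_op :: "(int \<Rightarrow> 'a::complex_hilbert) \<Rightarrow> 'a \<Rightarrow> 'a" where
  "frame_op h f = (\<Sum>\<^sub>\<infinity>n. scaleC (cinner f (h n)) (h n))"

definition canonical_dual :: "(int \<Rightarrow> 'a::complex_hilbert) \<Rightarrow> int \<Rightarrow> 'a" where
  "canonical_dual h x = inv (frame_op h) (h x)"

definition vweight :: "real \<Rightarrow> int \<Rightarrow> real" where
  "vweight s x = (1 + \<bar>real_of_int x\<bar>) powr s"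

definition schur_norm :: "real \<Rightarrow> (int \<Rightarrow> int \<Rightarrow> complex) \<Rightarrow> ennreal" where
  "schur_norm s M = max
     (SUP k. \<Sum>\<^sub>\<infinity>l. ennreal (cmod (M k l) * vweight s (k - l)))
     (SUP l. \<Sum>\<^sub>\<infinity>k. ennreal (cmod (M k l) * vweight s (k - l)))"

definition in_schur :: "real \<Rightarrow> (int \<Rightarrow> int \<Rightarrow> complex) \<Rightarrow> bool" where
  "in_schur s M \<longleftrightarrow> schur_norm s M < \<infinity>"

definition gramian :: "(int \<Rightarrow> 'a::complex_hilbert) \<Rightarrow> (int \<Rightarrow> 'a) \<Rightarrow> int \<Rightarrow> int \<Rightarrow> complex" where
  "gramian g f n x = cinner (g n) (f x)"

definition self_localized :: "real \<Rightarrow> (int \<Rightarrow> 'a::complex_hilbert) \<Rightarrow> bool" where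
  "self_localized s g \<longleftrightarrow> in_schur s (gramian g g)"

end

(*
  The frame operator S of g satisfies A <= S <= B, so I - S/B is a positive operator of norm at
  most 1 - A/B < 1; by the Banach fixed point theorem S is onto, and the canonical dual S^-1 g_x
  yields the reproducing formula <v, h> = sum_x <v, S^-1 g_x> <g_x, h>.  For v = sum_n c_n (e_n - f_n)
  the Schur test with the A^1 bound eps of the cross Gramian gives
  |<v, h>| <= eps * ||c||_2 * ||(<h, g_x>)_x||_2, and the Schur test for the Gramian of g bounds
  the last factor by sqrt K * ||h||, with K = ||A(G,G)||_{A^1}.  Taking c_n = <h, e_n - f_n> shows
  that (e_n - f_n) is a Bessel sequence with bound eps^2 K, and the triangle inequality in l^2
  moves the square roots of the frame bounds of f by at most eps * sqrt K.
*)

theory Submission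
  imports Defs
begin

lemma mult_self_le_mult_imp_le:
  fixes x y :: real
  assumes "x * x \<le> y * x" and "0 \<le> y"
  shows "x \<le> y"
  using assms mult_right_le_imp_le[of x x y] by (cases "0 < x") auto

lemma discriminant_le_if_quadratic_nonneg:
  fixes a b c :: real
  assumes nonneg: "\<And>r. 0 \<le> a - 2 * r * b + r\<^sup>2 * c" and "0 \<le> c"
  shows "b\<^sup>2 \<le> a * c"
proof (cases "c = 0")
  case True
  have "b = 0"
  proof (rule ccontr)
    assume "b \<noteq> 0"
    have "0 \<le> a - 2 * ((a + 1) / (2 * b)) * b" using nonneg[of "(a + 1) / (2 * b)"] True by simp
    also have "\<dots> = -1" using \<open>b \<noteq> 0\<close> by (simp add: field_simps)
    finally show False by simp
  qed
  then show ?thesis using True by simp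
next
  case False
  then have "c > 0" using \<open>0 \<le> c\<close> by simp
  have "0 \<le> a - 2 * (b / c) * b + (b / c)\<^sup>2 * c" by (rule nonneg)
  also have "\<dots> = (a * c - b\<^sup>2) / c" using \<open>c > 0\<close> by (simp add: field_simps power2_eq_square)
  finally show ?thesis using \<open>c > 0\<close> by (simp add: zero_le_divide_iff)
qed

lemma cinner_zero_left [simp]: "cinner (0::'a::complex_hilbert) y = 0"
proof -
  have "cinner (0::'a) y = cinner (0 + 0) y" by simp
  also have "\<dots> = cinner 0 y + cinner 0 y" by (rule cinner_add_left)
  finally show ?thesis by simp
qed

lemma cinner_minus_left: "cinner (- x::'a::complex_hilbert) y = - cinner x y"
proof -
  have "cinner (x + - x) y = cinner x y + cinner (- x) y" by (rule cinner_add_left)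
  then have "cinner (- x) y + cinner x y = 0" by (simp add: add.commute)
  then show ?thesis by (metis eq_neg_iff_add_eq_0)
qed

lemma cinner_diff_left: "cinner (x - z::'a::complex_hilbert) y = cinner x y - cinner z y"
  unfolding diff_conv_add_uminus cinner_add_left cinner_minus_left by simp

lemma cinner_add_right: "cinner (x::'a::complex_hilbert) (y + z) = cinner x y + cinner x z"
  by (metis cinner_commute cinner_add_left complex_cnj_add)

lemma cinner_diff_right: "cinner (x::'a::complex_hilbert) (y - z) = cinner x y - cinner x z"
  by (metis cinner_commute cinner_diff_left complex_cnj_diff)

lemma cinner_zero_right [simp]: "cinner (x::'a::complex_hilbert) 0 = 0"
  by (metis cinner_commute cinner_zero_left complex_cnj_zero)

lemma cinner_scaleC_right: "cinner (x::'a::complex_hilbert) (scaleC a y) = cnj a * cinner x y"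
  by (metis cinner_commute cinner_scaleC_left complex_cnj_mult)

lemma cinner_scaleR_left: "cinner (r *\<^sub>R x::'a::complex_hilbert) y = of_real r * cinner x y"
  by (simp add: scaleR_scaleC cinner_scaleC_left)

lemma cinner_scaleR_right: "cinner (x::'a::complex_hilbert) (r *\<^sub>R y) = of_real r * cinner x y"
  by (simp add: scaleR_scaleC cinner_scaleC_right)

lemma cinner_sum_left: "cinner (\<Sum>i\<in>I. f i::'a::complex_hilbert) y = (\<Sum>i\<in>I. cinner (f i) y)"
  by (induction I rule: infinite_finite_induct) (auto simp: cinner_add_left)

lemma cinner_sum_right: "cinner (y::'a::complex_hilbert) (\<Sum>i\<in>I. f i) = (\<Sum>i\<in>I. cinner y (f i))"
  by (induction I rule: infinite_finite_induct) (auto simp: cinner_add_right)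

lemma cinner_self: "cinner (x::'a::complex_hilbert) x = of_real ((norm x)\<^sup>2)"
proof -
  have "(norm x)\<^sup>2 = Re (cinner x x)" using norm_eq_sqrt_cinner[of x] cinner_self_nonneg[of x] by simp
  then show ?thesis using cinner_self_real[of x] by (simp add: complex_eq_iff)
qed

lemma Re_cinner_self: "Re (cinner (x::'a::complex_hilbert) x) = (norm x)\<^sup>2"
  by (simp add: cinner_self)

lemma Re_cnj_mult_self: "Re (cnj z * z) = (cmod z)\<^sup>2"
  by (metis Re_complex_of_real complex_norm_square mult.commute)

lemma positive_operator_cauchy_schwarz:
  fixes T :: "'a::complex_hilbert \<Rightarrow> 'a"
  assumes T: "linear T" and adj: "\<And>u v. cinner (T u) v = cinner u (T v)"
    and pos: "\<And>w. 0 \<le> Re (cinner (T w) w)"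
  shows "(Re (cinner (T u) v))\<^sup>2 \<le> Re (cinner (T u) u) * Re (cinner (T v) v)"
proof (rule discriminant_le_if_quadratic_nonneg)
  fix r :: real
  have sym: "Re (cinner (T v) u) = Re (cinner (T u) v)"
    using adj[of v u] cinner_commute[of v "T u"] by simp
  have "0 \<le> Re (cinner (T (u - r *\<^sub>R v)) (u - r *\<^sub>R v))" by (rule pos)
  also have "\<dots> = Re (cinner (T u) u) - 2 * r * Re (cinner (T u) v) + r\<^sup>2 * Re (cinner (T v) v)"
    using sym by (simp add: linear_diff[OF T] linear_scale[OF T] cinner_diff_left cinner_diff_right
        cinner_scaleR_left cinner_scaleR_right power2_eq_square algebra_simps)
  finally show "0 \<le> Re (cinner (T u) u) - 2 * r * Re (cinner (T u) v) + r\<^sup>2 * Re (cinner (T v) v)" .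
qed (rule pos)

(* The identity is a positive operator; scaling y by <x, y> makes <x, y'> = |<x, y>|^2 real. *)

lemma cauchy_schwarz: "cmod (cinner x y) \<le> norm x * norm (y::'a::complex_hilbert)"
proof -
  define b where "b = (cmod (cinner x y))\<^sup>2"
  have "(Re (cinner x (scaleC (cinner x y) y)))\<^sup>2
      \<le> Re (cinner x x) * Re (cinner (scaleC (cinner x y) y) (scaleC (cinner x y) y))"
    by (rule positive_operator_cauchy_schwarz[where T = "\<lambda>x. x"])
      (auto intro: linear_ident cinner_self_nonneg)
  also have "cinner x (scaleC (cinner x y) y) = of_real b"
    by (simp only: cinner_scaleC_right b_def complex_norm_square mult.commute)
  also have "cinner (scaleC (cinner x y) y) (scaleC (cinner x y) y)
      = (cinner x y * cnj (cinner x y)) * cinner y y"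
    by (simp add: cinner_scaleC_left cinner_scaleC_right mult_ac)
  also have "\<dots> = of_real (b * (norm y)\<^sup>2)"
    by (simp only: b_def cinner_self complex_norm_square of_real_mult)
  finally have "b * b \<le> (norm x * norm y)\<^sup>2 * b"
    by (simp only: Re_complex_of_real cinner_self power2_eq_square mult_ac)
  then have "b \<le> (norm x * norm y)\<^sup>2" by (rule mult_self_le_mult_imp_le) simp
  then show ?thesis unfolding b_def by (rule power2_le_imp_le) simp
qed

lemma bounded_linear_cinner_left: "bounded_linear (\<lambda>v::'a::complex_hilbert. cinner v u)"
  by (rule bounded_linear_intro[where K = "norm u"])
    (auto simp: cinner_add_left cinner_scaleR_left scaleR_conv_of_real cauchy_schwarz)

lemma norm_positive_operator_le:
  fixes T :: "'a::complex_hilbert \<Rightarrow> 'a"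
  assumes T: "linear T" and adj: "\<And>u v. cinner (T u) v = cinner u (T v)"
    and pos: "\<And>w. 0 \<le> Re (cinner (T w) w)"
    and le: "\<And>w. Re (cinner (T w) w) \<le> c * (norm w)\<^sup>2" and "0 \<le> c"
  shows "norm (T u) \<le> c * norm u"
proof -
  define b where "b = (norm (T u))\<^sup>2"
  have "b\<^sup>2 \<le> Re (cinner (T u) u) * Re (cinner (T (T u)) (T u))"
    using positive_operator_cauchy_schwarz[OF T adj pos, of u "T u"] by (simp add: b_def cinner_self)
  also have "\<dots> \<le> (c * (norm u)\<^sup>2) * (c * b)"
    using le[of u] le[of "T u"] pos[of "T u"] \<open>0 \<le> c\<close> by (intro mult_mono) (auto simp: b_def)
  finally have "b * b \<le> (c * norm u)\<^sup>2 * b" by (simp add: power2_eq_square mult_ac)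
  then have "b \<le> (c * norm u)\<^sup>2" by (rule mult_self_le_mult_imp_le) simp
  then show ?thesis unfolding b_def by (rule power2_le_imp_le) (simp add: \<open>0 \<le> c\<close>)
qed

section \<open>The Schur test\<close>

lemma L2_set_power2: "(L2_set f A)\<^sup>2 = (\<Sum>i\<in>A. (f i)\<^sup>2)"
  by (simp add: L2_set_def sum_nonneg)

definition schur_bounded :: "('i \<Rightarrow> 'j \<Rightarrow> complex) \<Rightarrow> real \<Rightarrow> bool" where
  "schur_bounded M c \<longleftrightarrow>
     (\<forall>k F. finite F \<longrightarrow> (\<Sum>l\<in>F. cmod (M k l)) \<le> c) \<and>
     (\<forall>l F. finite F \<longrightarrow> (\<Sum>k\<in>F. cmod (M k l)) \<le> c)"

lemma schur_bounded_nonneg: "schur_bounded M c \<Longrightarrow> 0 \<le> c"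
  unfolding schur_bounded_def by (metis finite.emptyI sum.empty)

lemma sum_le_if_SUP_infsum_le:
  fixes N :: "'i \<Rightarrow> 'j \<Rightarrow> real"
  assumes SUP: "(SUP k. \<Sum>\<^sub>\<infinity>l. ennreal (N k l)) \<le> ennreal c"
    and "0 \<le> c" and "finite F" and "\<And>l. 0 \<le> N k l"
  shows "(\<Sum>l\<in>F. N k l) \<le> c"
proof -
  have "ennreal (\<Sum>l\<in>F. N k l) = (\<Sum>l\<in>F. ennreal (N k l))"
    using \<open>\<And>l. 0 \<le> N k l\<close> by simp
  also have "\<dots> \<le> (\<Sum>\<^sub>\<infinity>l. ennreal (N k l))"
    using \<open>finite F\<close> by (auto simp: nonneg_infsum_complete intro!: SUP_upper)
  also have "\<dots> \<le> (SUP k. \<Sum>\<^sub>\<infinity>l. ennreal (N k l))" by (rule SUP_upper) simp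
  also have "\<dots> \<le> ennreal c" by (rule SUP)
  finally show ?thesis using \<open>0 \<le> c\<close> by (simp add: ennreal_le_iff)
qed

lemma schur_bounded_if_schur_norm_le:
  assumes "schur_norm 0 M \<le> ennreal c" and "0 \<le> c"
  shows "schur_bounded M c"
proof -
  have "vweight 0 x = 1" for x
    by (simp add: vweight_def add_nonneg_eq_0_iff)
  then have "(SUP k. \<Sum>\<^sub>\<infinity>l. ennreal (cmod (M k l))) \<le> ennreal c"
    and "(SUP l. \<Sum>\<^sub>\<infinity>k. ennreal (cmod (M k l))) \<le> ennreal c"
    using assms(1) by (simp_all add: schur_norm_def)
  then show ?thesis
    unfolding schur_bounded_def
    using sum_le_if_SUP_infsum_le[where N = "\<lambda>k l. cmod (M k l)"]
      sum_le_if_SUP_infsum_le[where N = "\<lambda>l k. cmod (M k l)"] \<open>0 \<le> c\<close>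
    by simp
qed

lemma double_sum_weighted_le:
  fixes m :: "'i \<Rightarrow> 'j \<Rightarrow> real"
  assumes "\<And>n. n \<in> N \<Longrightarrow> (\<Sum>x\<in>X. m n x) \<le> c"
  shows "(\<Sum>n\<in>N. \<Sum>x\<in>X. m n x * (\<alpha> n)\<^sup>2) \<le> c * (\<Sum>n\<in>N. (\<alpha> n)\<^sup>2)"
proof -
  have "(\<Sum>n\<in>N. \<Sum>x\<in>X. m n x * (\<alpha> n)\<^sup>2) = (\<Sum>n\<in>N. (\<Sum>x\<in>X. m n x) * (\<alpha> n)\<^sup>2)"
    by (simp add: sum_distrib_right)
  also have "\<dots> \<le> (\<Sum>n\<in>N. c * (\<alpha> n)\<^sup>2)"
    using assms by (intro sum_mono mult_right_mono) auto
  finally show ?thesis by (simp add: sum_distrib_left)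
qed

(* Cauchy-Schwarz on N \<times> X after splitting each entry as sqrt |m| * sqrt |m|. *)

lemma schur_test:
  assumes M: "schur_bounded M c" and "finite N" "finite X"
  shows "(\<Sum>n\<in>N. \<Sum>x\<in>X. \<bar>\<alpha> n\<bar> * cmod (M n x) * \<bar>\<beta> x\<bar>) \<le> c * L2_set \<alpha> N * L2_set \<beta> X"
proof -
  define p where "p = (\<lambda>(n, x). sqrt (cmod (M n x)) * \<alpha> n)"
  define q where "q = (\<lambda>(n, x). sqrt (cmod (M n x)) * \<beta> x)"
  have c: "0 \<le> c" using M by (rule schur_bounded_nonneg)
  have pq: "\<bar>p (n, x)\<bar> * \<bar>q (n, x)\<bar> = \<bar>\<alpha> n\<bar> * cmod (M n x) * \<bar>\<beta> x\<bar>" for n x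
  proof -
    have "\<bar>p (n, x)\<bar> * \<bar>q (n, x)\<bar> = \<bar>\<alpha> n\<bar> * (sqrt (cmod (M n x)) * sqrt (cmod (M n x))) * \<bar>\<beta> x\<bar>"
      by (simp only: p_def q_def prod.case abs_mult mult_ac)
    then show ?thesis by simp
  qed
  have "(\<Sum>n\<in>N. \<Sum>x\<in>X. \<bar>\<alpha> n\<bar> * cmod (M n x) * \<bar>\<beta> x\<bar>) = (\<Sum>z\<in>N \<times> X. \<bar>p z\<bar> * \<bar>q z\<bar>)"
    unfolding sum.cartesian_product by (rule sum.cong) (simp_all add: pq split: prod.split)
  also have "\<dots> \<le> L2_set p (N \<times> X) * L2_set q (N \<times> X)" by (rule L2_set_mult_ineq)
  also have "\<dots> \<le> (sqrt c * L2_set \<alpha> N) * (sqrt c * L2_set \<beta> X)"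
  proof (intro mult_mono)
    have "(L2_set p (N \<times> X))\<^sup>2 = (\<Sum>n\<in>N. \<Sum>x\<in>X. cmod (M n x) * (\<alpha> n)\<^sup>2)"
      unfolding L2_set_power2 sum.cartesian_product
      by (rule sum.cong) (auto simp: p_def power_mult_distrib)
    also have "\<dots> \<le> c * (L2_set \<alpha> N)\<^sup>2"
      unfolding L2_set_power2 using M \<open>finite X\<close>
      by (intro double_sum_weighted_le) (simp add: schur_bounded_def)
    also have "\<dots> = (sqrt c * L2_set \<alpha> N)\<^sup>2" using c by (simp add: power_mult_distrib)
    finally show "L2_set p (N \<times> X) \<le> sqrt c * L2_set \<alpha> N"
      by (rule power2_le_imp_le) (simp add: c)
    have "(L2_set q (N \<times> X))\<^sup>2 = (\<Sum>n\<in>N. \<Sum>x\<in>X. cmod (M n x) * (\<beta> x)\<^sup>2)"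
      unfolding L2_set_power2 sum.cartesian_product
      by (rule sum.cong) (auto simp: q_def power_mult_distrib)
    also have "\<dots> = (\<Sum>x\<in>X. \<Sum>n\<in>N. cmod (M n x) * (\<beta> x)\<^sup>2)" by (rule sum.swap)
    also have "\<dots> \<le> c * (L2_set \<beta> X)\<^sup>2"
      unfolding L2_set_power2 using M \<open>finite N\<close>
      by (intro double_sum_weighted_le[where m = "\<lambda>x n. cmod (M n x)"]) (simp add: schur_bounded_def)
    also have "\<dots> = (sqrt c * L2_set \<beta> X)\<^sup>2" using c by (simp add: power_mult_distrib)
    finally show "L2_set q (N \<times> X) \<le> sqrt c * L2_set \<beta> X"
      by (rule power2_le_imp_le) (simp add: c)
  qed (use c in auto)
  also have "\<dots> = c * L2_set \<alpha> N * L2_set \<beta> X"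
    using c by (simp add: mult_ac)
  finally show ?thesis .
qed

definition bessel_bounded :: "('i \<Rightarrow> 'a::complex_hilbert) \<Rightarrow> real \<Rightarrow> bool" where
  "bessel_bounded g K \<longleftrightarrow> 0 \<le> K \<and>
     (\<forall>h F. finite F \<longrightarrow> (\<Sum>x\<in>F. (cmod (cinner h (g x)))\<^sup>2) \<le> K * (norm h)\<^sup>2)"

lemma bessel_boundedD:
  "bessel_bounded g K \<Longrightarrow> finite F \<Longrightarrow> (\<Sum>x\<in>F. (cmod (cinner h (g x)))\<^sup>2) \<le> K * (norm h)\<^sup>2"
  by (simp add: bessel_bounded_def)

lemma L2_set_cinner_le:
  assumes "bessel_bounded g K" and "finite F"
  shows "L2_set (\<lambda>x. cmod (cinner h (g x))) F \<le> sqrt K * norm h"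
proof (rule power2_le_imp_le)
  show "(L2_set (\<lambda>x. cmod (cinner h (g x))) F)\<^sup>2 \<le> (sqrt K * norm h)\<^sup>2"
    using bessel_boundedD[OF assms, of h] assms(1)
    by (simp add: L2_set_power2 power_mult_distrib bessel_bounded_def)
qed (use assms(1) in \<open>simp add: bessel_bounded_def\<close>)

lemma Re_cinner_analysis_synthesis:
  "Re (cinner h (\<Sum>x\<in>F. scaleC (cinner h (g x)) (g x))) = (\<Sum>x\<in>F. (cmod (cinner h (g x)))\<^sup>2)"
proof -
  have "cinner h (\<Sum>x\<in>F. scaleC (cinner h (g x)) (g x)) = (\<Sum>x\<in>F. cnj (cinner h (g x)) * cinner h (g x))"
    by (simp add: cinner_sum_right cinner_scaleC_right)
  then show ?thesis by (simp only: Re_sum Re_cnj_mult_self)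
qed

lemma bessel_boundedI_synthesis:
  fixes g :: "'i \<Rightarrow> 'a::complex_hilbert"
  assumes K: "0 \<le> K"
    and synthesis: "\<And>c F. finite F \<Longrightarrow>
      (norm (\<Sum>x\<in>F. scaleC (c x) (g x)))\<^sup>2 \<le> K * (\<Sum>x\<in>F. (cmod (c x))\<^sup>2)"
  shows "bessel_bounded g K"
proof -
  have "(\<Sum>x\<in>F. (cmod (cinner h (g x)))\<^sup>2) \<le> K * (norm h)\<^sup>2" if "finite F" for h F
  proof -
    define S where "S = (\<Sum>x\<in>F. (cmod (cinner h (g x)))\<^sup>2)"
    define u where "u = (\<Sum>x\<in>F. scaleC (cinner h (g x)) (g x))"
    have "S = Re (cinner h u)"
      by (simp only: S_def u_def Re_cinner_analysis_synthesis)
    also have "\<dots> \<le> norm h * norm u"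
      using complex_Re_le_cmod cauchy_schwarz order_trans by blast
    finally have "S\<^sup>2 \<le> (norm h)\<^sup>2 * (norm u)\<^sup>2"
      by (metis S_def power_mono power_mult_distrib sum_nonneg zero_le_power2)
    also have "\<dots> \<le> (norm h)\<^sup>2 * (K * S)"
      using synthesis[OF that] by (intro mult_left_mono) (simp_all add: S_def u_def)
    finally have "S * S \<le> (K * (norm h)\<^sup>2) * S" by (simp add: power2_eq_square mult_ac)
    then show ?thesis unfolding S_def by (rule mult_self_le_mult_imp_le) (simp add: K)
  qed
  with K show ?thesis by (simp add: bessel_bounded_def)
qed

lemma synthesis_bound:
  fixes g :: "'i \<Rightarrow> 'a::complex_hilbert"
  assumes bessel: "bessel_bounded g K" and F: "finite F"
  shows "(norm (\<Sum>x\<in>F. scaleC (c x) (g x)))\<^sup>2 \<le> K * (\<Sum>x\<in>F. (cmod (c x))\<^sup>2)"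
proof -
  define u where "u = (\<Sum>x\<in>F. scaleC (c x) (g x))"
  have K: "0 \<le> K" using bessel by (simp add: bessel_bounded_def)
  have "cinner u u = (\<Sum>x\<in>F. c x * cinner (g x) u)"
    using cinner_sum_left[of "\<lambda>x. scaleC (c x) (g x)" F u]
    by (simp add: cinner_scaleC_left flip: u_def)
  then have "(norm u)\<^sup>2 = Re (\<Sum>x\<in>F. c x * cinner (g x) u)"
    by (metis Re_cinner_self)
  also have "\<dots> \<le> cmod (\<Sum>x\<in>F. c x * cinner (g x) u)" by (rule complex_Re_le_cmod)
  also have "\<dots> \<le> (\<Sum>x\<in>F. cmod (c x * cinner (g x) u))" by (rule norm_sum)
  also have "\<dots> = (\<Sum>x\<in>F. \<bar>cmod (c x)\<bar> * \<bar>cmod (cinner u (g x))\<bar>)"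
    by (simp add: norm_mult cinner_commute[of "g x" u for x])
  also have "\<dots> \<le> L2_set (\<lambda>x. cmod (c x)) F * L2_set (\<lambda>x. cmod (cinner u (g x))) F"
    by (rule L2_set_mult_ineq)
  also have "\<dots> \<le> L2_set (\<lambda>x. cmod (c x)) F * (sqrt K * norm u)"
    using L2_set_cinner_le[OF bessel F] by (intro mult_left_mono) auto
  finally have "norm u * norm u \<le> (sqrt K * L2_set (\<lambda>x. cmod (c x)) F) * norm u"
    by (simp add: power2_eq_square mult_ac)
  then have "norm u \<le> sqrt K * L2_set (\<lambda>x. cmod (c x)) F"
    by (rule mult_self_le_mult_imp_le) (simp add: K)
  then have "(norm u)\<^sup>2 \<le> (sqrt K * L2_set (\<lambda>x. cmod (c x)) F)\<^sup>2"
    by (simp add: power_mono)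
  then show ?thesis using K by (simp add: u_def power_mult_distrib L2_set_power2)
qed

lemma bessel_bounded_gramian:
  fixes g :: "int \<Rightarrow> 'a::complex_hilbert"
  assumes gram: "schur_bounded (gramian g g) K"
  shows "bessel_bounded g K"
proof (rule bessel_boundedI_synthesis)
  show K: "0 \<le> K" using gram by (rule schur_bounded_nonneg)
  fix c :: "int \<Rightarrow> complex" and F :: "int set"
  assume F: "finite F"
  have "cinner (\<Sum>x\<in>F. scaleC (c x) (g x)) (\<Sum>y\<in>F. scaleC (c y) (g y))
      = (\<Sum>x\<in>F. \<Sum>y\<in>F. c x * cnj (c y) * cinner (g x) (g y))"
    unfolding cinner_sum_left
    by (simp add: cinner_sum_right cinner_scaleC_left cinner_scaleC_right sum_distrib_left mult_ac)
  then have "(norm (\<Sum>x\<in>F. scaleC (c x) (g x)))\<^sup>2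
      = Re (\<Sum>x\<in>F. \<Sum>y\<in>F. c x * cnj (c y) * cinner (g x) (g y))"
    by (metis Re_cinner_self)
  also have "\<dots> \<le> (\<Sum>x\<in>F. \<Sum>y\<in>F. \<bar>cmod (c x)\<bar> * cmod (gramian g g x y) * \<bar>cmod (c y)\<bar>)"
    using complex_Re_le_cmod
    by (rule order_trans)
      (auto simp: gramian_def norm_mult intro!: order_trans[OF norm_sum] sum_mono)
  also have "\<dots> \<le> K * L2_set (\<lambda>x. cmod (c x)) F * L2_set (\<lambda>x. cmod (c x)) F"
    using gram F F by (rule schur_test)
  also have "\<dots> = K * (\<Sum>x\<in>F. (cmod (c x))\<^sup>2)"
    by (simp add: mult.assoc L2_set_power2 flip: power2_eq_square)
  finally show "(norm (\<Sum>x\<in>F. scaleC (c x) (g x)))\<^sup>2 \<le> K * (\<Sum>x\<in>F. (cmod (c x))\<^sup>2)" .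
qed

lemma summable_on_if_tails_small:
  fixes f :: "'i \<Rightarrow> 'a::banach"
  assumes tails: "\<And>e. 0 < e \<Longrightarrow>
    \<exists>F0. finite F0 \<and> F0 \<subseteq> A \<and> (\<forall>G. finite G \<and> G \<subseteq> A - F0 \<longrightarrow> norm (sum f G) < e)"
  shows "f summable_on A"
proof -
  have "\<exists>P. eventually P (finite_subsets_at_top A) \<and>
      (\<forall>F F'. P F \<and> P F' \<longrightarrow> dist (sum f F) (sum f F') < e)" if "0 < e" for e
  proof -
    obtain F0 where F0: "finite F0" "F0 \<subseteq> A"
      and small: "\<And>G. finite G \<Longrightarrow> G \<subseteq> A - F0 \<Longrightarrow> norm (sum f G) < e / 2"
      using tails[of "e / 2"] \<open>0 < e\<close> by auto
    define P where "P F \<longleftrightarrow> finite F \<and> F0 \<subseteq> F \<and> F \<subseteq> A" for F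
    have "eventually P (finite_subsets_at_top A)"
      unfolding P_def eventually_finite_subsets_at_top using F0 by blast
    moreover have "dist (sum f F) (sum f F') < e" if "P F" "P F'" for F F'
    proof -
      have split: "sum f H = sum f F0 + sum f (H - F0)" if "P H" for H
        using that unfolding P_def by (metis add.commute sum.subset_diff)
      have "dist (sum f F) (sum f F') = norm (sum f (F - F0) - sum f (F' - F0))"
        by (simp add: dist_norm split[OF \<open>P F\<close>] split[OF \<open>P F'\<close>])
      also have "\<dots> \<le> norm (sum f (F - F0)) + norm (sum f (F' - F0))"
        by (rule norm_triangle_ineq4)
      also have "\<dots> < e / 2 + e / 2"
        using that by (intro add_strict_mono small) (auto simp: P_def)
      finally show ?thesis by simp
    qed
    ultimately show ?thesis by blast
  qed
  then have "cauchy_filter (filtermap (sum f) (finite_subsets_at_top A))"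
    by (simp add: cauchy_filter_metric_filtermap)
  then obtain L where "filtermap (sum f) (finite_subsets_at_top A) \<le> nhds L"
    using cauchy_filter_convergent convergent_filter_iff by blast
  then show ?thesis
    unfolding summable_on_def has_sum_def filterlim_def by blast
qed

lemma tails_small_if_summable:
  fixes \<phi> :: "'i \<Rightarrow> real"
  assumes "\<phi> summable_on A" and nonneg: "\<And>x. x \<in> A \<Longrightarrow> 0 \<le> \<phi> x" and "0 < e"
  shows "\<exists>F0. finite F0 \<and> F0 \<subseteq> A \<and> (\<forall>G. finite G \<and> G \<subseteq> A - F0 \<longrightarrow> sum \<phi> G < e)"
proof -
  obtain F0 where F0: "finite F0" "F0 \<subseteq> A" and approx: "dist (sum \<phi> F0) (infsum \<phi> A) \<le> e / 2"
    using has_sum_finite_approximation[OF has_sum_infsum[OF \<open>\<phi> summable_on A\<close>], of "e / 2"]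
      \<open>0 < e\<close> by auto
  have "sum \<phi> G < e" if G: "finite G" "G \<subseteq> A - F0" for G
  proof -
    have "sum \<phi> G + sum \<phi> F0 = sum \<phi> (G \<union> F0)"
      using G F0 by (subst sum.union_disjoint) auto
    also have "\<dots> \<le> infsum \<phi> A"
      using G F0 by (intro finite_sum_le_infsum \<open>\<phi> summable_on A\<close> nonneg) auto
    finally show ?thesis using approx \<open>0 < e\<close> unfolding dist_real_def abs_le_iff by linarith
  qed
  with F0 show ?thesis by blast
qed

lemma summable_on_synthesis:
  fixes g :: "'i \<Rightarrow> 'a::complex_hilbert"
  assumes bessel: "bessel_bounded g K" and c: "(\<lambda>x. (cmod (c x))\<^sup>2) summable_on A"
  shows "(\<lambda>x. scaleC (c x) (g x)) summable_on A"
proof (rule summable_on_if_tails_small)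
  fix e :: real assume "0 < e"
  have K: "0 \<le> K" using bessel by (simp add: bessel_bounded_def)
  obtain F0 where F0: "finite F0" "F0 \<subseteq> A"
    and small: "\<And>G. finite G \<Longrightarrow> G \<subseteq> A - F0 \<Longrightarrow> (\<Sum>x\<in>G. (cmod (c x))\<^sup>2) < e\<^sup>2 / (K + 1)"
    using tails_small_if_summable[OF c, of "e\<^sup>2 / (K + 1)"] \<open>0 < e\<close> K by auto
  have "norm (\<Sum>x\<in>G. scaleC (c x) (g x)) < e" if "finite G" "G \<subseteq> A - F0" for G
  proof -
    have "(norm (\<Sum>x\<in>G. scaleC (c x) (g x)))\<^sup>2 \<le> K * (\<Sum>x\<in>G. (cmod (c x))\<^sup>2)"
      using bessel \<open>finite G\<close> by (rule synthesis_bound)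
    also have "\<dots> \<le> K * (e\<^sup>2 / (K + 1))"
      using small[OF that] K by (intro mult_left_mono) auto
    also have "\<dots> < e\<^sup>2"
      using K \<open>0 < e\<close> by (simp add: field_simps)
    finally show ?thesis using \<open>0 < e\<close> by (simp add: power_less_imp_less_base)
  qed
  with F0 show "\<exists>F0. finite F0 \<and> F0 \<subseteq> A \<and>
      (\<forall>G. finite G \<and> G \<subseteq> A - F0 \<longrightarrow> norm (\<Sum>x\<in>G. scaleC (c x) (g x)) < e)"
    by blast
qed

lemma norm_has_sum_le_if_finite_sums_le:
  fixes f :: "'i \<Rightarrow> 'a::real_normed_vector"
  assumes "(f has_sum s) A" and "\<And>F. finite F \<Longrightarrow> F \<subseteq> A \<Longrightarrow> (\<Sum>x\<in>F. norm (f x)) \<le> R"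
  shows "norm s \<le> R"
proof -
  have summable: "(\<lambda>x. norm (f x)) summable_on A"
    using assms(2) by (intro nonneg_bdd_above_summable_on bdd_aboveI) auto
  have "norm s \<le> (\<Sum>\<^sub>\<infinity>x\<in>A. norm (f x))"
    using assms(1) has_sum_infsum[OF summable] by (rule norm_infsum_le) simp
  also have "\<dots> \<le> R" using summable assms(2) by (rule infsum_le_finite_sums)
  finally show ?thesis .
qed

section \<open>The frame operator\<close>

locale frame =
  fixes g :: "int \<Rightarrow> 'a::complex_hilbert" and A B :: real
  assumes frame_bounds: "frame_bounds g A B"
begin

lemma bounds: "0 < A" "A \<le> B"
  using frame_bounds by (simp_all add: frame_bounds_def)

lemma coefficients_summable: "(\<lambda>x. (cmod (cinner w (g x)))\<^sup>2) summable_on UNIV"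
  using frame_bounds by (simp add: frame_bounds_def)

lemma lower_bound: "A * (norm w)\<^sup>2 \<le> (\<Sum>\<^sub>\<infinity>x. (cmod (cinner w (g x)))\<^sup>2)"
  using frame_bounds by (simp add: frame_bounds_def)

lemma upper_bound: "(\<Sum>\<^sub>\<infinity>x. (cmod (cinner w (g x)))\<^sup>2) \<le> B * (norm w)\<^sup>2"
  using frame_bounds by (simp add: frame_bounds_def)

lemma bessel: "bessel_bounded g B"
  unfolding bessel_bounded_def
  using bounds order_trans[OF finite_sum_le_infsum[OF coefficients_summable] upper_bound] by auto

lemma has_sum_frame_op: "((\<lambda>x. scaleC (cinner w (g x)) (g x)) has_sum frame_op g w) UNIV"
  unfolding frame_op_def by (rule has_sum_infsum summable_on_synthesis bessel coefficients_summable)+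

lemma has_sum_cinner_frame_op:
  "((\<lambda>x. cinner w (g x) * cinner (g x) u) has_sum cinner (frame_op g w) u) UNIV"
  using has_sum_bounded_linear[OF bounded_linear_cinner_left[of u] has_sum_frame_op[of w]]
  by (simp add: cinner_scaleC_left)

lemma linear_frame_op: "linear (frame_op g)"
proof (rule linearI)
  fix a b
  have "((\<lambda>x. scaleC (cinner (a + b) (g x)) (g x)) has_sum frame_op g a + frame_op g b) UNIV"
    using has_sum_add[OF has_sum_frame_op[of a] has_sum_frame_op[of b]]
    by (simp add: cinner_add_left scaleC_add_left)
  with has_sum_frame_op show "frame_op g (a + b) = frame_op g a + frame_op g b"
    by (rule has_sum_unique)
next
  fix r a
  have "((\<lambda>x. scaleC (cinner (r *\<^sub>R a) (g x)) (g x)) has_sum r *\<^sub>R frame_op g a) UNIV"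
    using has_sum_scaleR[OF has_sum_frame_op[of a], of r]
    by (simp add: scaleR_scaleC cinner_scaleC_left scaleC_scaleC)
  with has_sum_frame_op show "frame_op g (r *\<^sub>R a) = r *\<^sub>R frame_op g a"
    by (rule has_sum_unique)
qed

lemma cinner_frame_op_commute: "cinner (frame_op g w) u = cinner w (frame_op g u)"
proof -
  have "((\<lambda>x. cnj (cinner u (g x) * cinner (g x) w)) has_sum cnj (cinner (frame_op g u) w)) UNIV"
    using has_sum_cinner_frame_op[of u w] by (simp only: has_sum_cnj_iff)
  then have "((\<lambda>x. cinner w (g x) * cinner (g x) u) has_sum cinner w (frame_op g u)) UNIV"
    by (simp add: cinner_commute[of "g x" u for x] cinner_commute[of w "g x" for x]
        cinner_commute[of w "frame_op g u"] mult.commute)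
  with has_sum_cinner_frame_op show ?thesis by (rule has_sum_unique)
qed

lemma Re_cinner_frame_op_self:
  "Re (cinner (frame_op g w) w) = (\<Sum>\<^sub>\<infinity>x. (cmod (cinner w (g x)))\<^sup>2)"
proof -
  have "Re (cinner w (g x) * cinner (g x) w) = (cmod (cinner w (g x)))\<^sup>2" for x
    using Re_cnj_mult_self[of "cinner w (g x)"] by (simp add: cinner_commute[of "g x" w] mult.commute)
  then have "((\<lambda>x. (cmod (cinner w (g x)))\<^sup>2) has_sum Re (cinner (frame_op g w) w)) UNIV"
    using has_sum_Re[OF has_sum_cinner_frame_op[of w w]] by simp
  then show ?thesis by (simp add: infsumI)
qed

lemma norm_diff_frame_op_le: "norm (u - (1 / B) *\<^sub>R frame_op g u) \<le> (1 - A / B) * norm u"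
proof (rule norm_positive_operator_le)
  show "linear (\<lambda>u. u - (1 / B) *\<^sub>R frame_op g u)"
    by (rule linearI) (simp_all add: linear_add[OF linear_frame_op] linear_scale[OF linear_frame_op]
        algebra_simps)
  show "cinner (u - (1 / B) *\<^sub>R frame_op g u) v = cinner u (v - (1 / B) *\<^sub>R frame_op g v)" for u v
    by (simp add: cinner_diff_left cinner_diff_right cinner_scaleR_left cinner_scaleR_right
        cinner_frame_op_commute)
  have Re: "Re (cinner (w - (1 / B) *\<^sub>R frame_op g w) w)
      = (norm w)\<^sup>2 - (\<Sum>\<^sub>\<infinity>x. (cmod (cinner w (g x)))\<^sup>2) / B" for w
    by (simp add: cinner_diff_left cinner_scaleR_left Re_cinner_self Re_cinner_frame_op_self)
  show "0 \<le> Re (cinner (w - (1 / B) *\<^sub>R frame_op g w) w)" for w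
    using upper_bound[of w] bounds unfolding Re by (simp add: field_simps)
  show "Re (cinner (w - (1 / B) *\<^sub>R frame_op g w) w) \<le> (1 - A / B) * (norm w)\<^sup>2" for w
    using lower_bound[of w] bounds unfolding Re by (simp add: field_simps)
  show "0 \<le> 1 - A / B" using bounds by simp
qed

lemma surj_frame_op: "surj (frame_op g)"
proof -
  have "\<exists>w. frame_op g w = y" for y
  proof -
    define \<Phi> where "\<Phi> w = (1 / B) *\<^sub>R y + (w - (1 / B) *\<^sub>R frame_op g w)" for w
    have "\<exists>!w. \<Phi> w = w"
    proof (rule banach_fix_type)
      show "0 \<le> 1 - A / B" "1 - A / B < 1" using bounds by auto
      show "\<forall>a b. dist (\<Phi> a) (\<Phi> b) \<le> (1 - A / B) * dist a b"
      proof (intro allI)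
        fix a b
        have "\<Phi> a - \<Phi> b = (a - b) - (1 / B) *\<^sub>R frame_op g (a - b)"
          by (simp add: \<Phi>_def linear_diff[OF linear_frame_op] algebra_simps)
        then show "dist (\<Phi> a) (\<Phi> b) \<le> (1 - A / B) * dist a b"
          by (simp add: dist_norm norm_diff_frame_op_le)
      qed
    qed
    then obtain w where "\<Phi> w = w" by blast
    then have "(1 / B) *\<^sub>R frame_op g w = (1 / B) *\<^sub>R y" by (auto simp: \<Phi>_def algebra_simps)
    then have "frame_op g w = y" using bounds by auto
    then show ?thesis ..
  qed
  then show ?thesis by (metis surj_def)
qed

lemma has_sum_canonical_dual_expansion:
  "((\<lambda>x. cinner v (canonical_dual g x) * cinner (g x) h) has_sum cinner v h) UNIV"
proof -
  define p where "p = inv (frame_op g) v"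
  have "cinner v (canonical_dual g x) = cinner p (g x)" for x
    using cinner_frame_op_commute[of p "inv (frame_op g) (g x)"] surj_frame_op
    by (simp add: p_def canonical_dual_def surj_f_inv_f)
  then show ?thesis
    using has_sum_cinner_frame_op[of p h] surj_frame_op by (simp add: p_def surj_f_inv_f)
qed

end

section \<open>Perturbation of frames\<close>

context frame
begin

lemma sqrt_lower_bound: "sqrt A * norm w \<le> sqrt (\<Sum>\<^sub>\<infinity>x. (cmod (cinner w (g x)))\<^sup>2)"
  using real_sqrt_le_mono[OF lower_bound[of w]] bounds by (simp add: real_sqrt_mult)

lemma sqrt_upper_bound: "sqrt (\<Sum>\<^sub>\<infinity>x. (cmod (cinner w (g x)))\<^sup>2) \<le> sqrt B * norm w"
  using real_sqrt_le_mono[OF upper_bound[of w]] bounds by (simp add: real_sqrt_mult)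

lemma cmod_cinner_synthesis_le:
  assumes bessel_K: "bessel_bounded g K"
    and pert: "schur_bounded (gramian v (canonical_dual g)) \<epsilon>" and N: "finite N"
  shows "cmod (cinner (\<Sum>n\<in>N. scaleC (a n) (v n)) h)
    \<le> \<epsilon> * L2_set (\<lambda>n. cmod (a n)) N * (sqrt K * norm h)"
proof (rule norm_has_sum_le_if_finite_sums_le[OF has_sum_canonical_dual_expansion])
  fix X :: "int set" assume X: "finite X"
  define w where "w = (\<Sum>n\<in>N. scaleC (a n) (v n))"
  have coefficient: "cmod (cinner w (canonical_dual g x))
      \<le> (\<Sum>n\<in>N. cmod (a n) * cmod (gramian v (canonical_dual g) n x))" for x
    unfolding w_def cinner_sum_left
    by (rule order_trans[OF norm_sum]) (simp add: cinner_scaleC_left gramian_def norm_mult)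
  have "(\<Sum>x\<in>X. cmod (cinner w (canonical_dual g x) * cinner (g x) h))
      \<le> (\<Sum>x\<in>X. (\<Sum>n\<in>N. cmod (a n) * cmod (gramian v (canonical_dual g) n x))
          * cmod (cinner h (g x)))"
    using coefficient
    by (intro sum_mono) (simp add: norm_mult cinner_commute[of "g x" h for x] mult_right_mono)
  also have "\<dots> = (\<Sum>n\<in>N. \<Sum>x\<in>X. \<bar>cmod (a n)\<bar> * cmod (gramian v (canonical_dual g) n x)
      * \<bar>cmod (cinner h (g x))\<bar>)"
    by (subst sum.swap) (simp add: sum_distrib_right)
  also have "\<dots> \<le> \<epsilon> * L2_set (\<lambda>n. cmod (a n)) N * L2_set (\<lambda>x. cmod (cinner h (g x))) X"
    using pert N X by (rule schur_test)
  also have "\<dots> \<le> \<epsilon> * L2_set (\<lambda>n. cmod (a n)) N * (sqrt K * norm h)"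
    using L2_set_cinner_le[OF bessel_K X] schur_bounded_nonneg[OF pert]
    by (intro mult_left_mono) auto
  finally show "(\<Sum>x\<in>X. cmod (cinner w (canonical_dual g x) * cinner (g x) h))
      \<le> \<epsilon> * L2_set (\<lambda>n. cmod (a n)) N * (sqrt K * norm h)" .
qed

lemma bessel_bounded_perturbation:
  assumes bessel_K: "bessel_bounded g K"
    and pert: "schur_bounded (gramian v (canonical_dual g)) \<epsilon>"
  shows "bessel_bounded v (\<epsilon>\<^sup>2 * K)"
proof -
  have K: "0 \<le> K" using bessel_K by (simp add: bessel_bounded_def)
  have \<epsilon>: "0 \<le> \<epsilon>" using pert by (rule schur_bounded_nonneg)
  have "(\<Sum>n\<in>N. (cmod (cinner h (v n)))\<^sup>2) \<le> \<epsilon>\<^sup>2 * K * (norm h)\<^sup>2" if N: "finite N" for h N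
  proof -
    define r where "r = L2_set (\<lambda>n. cmod (cinner h (v n))) N"
    define w where "w = (\<Sum>n\<in>N. scaleC (cinner h (v n)) (v n))"
    have "r * r = Re (cinner h w)"
      by (simp add: r_def w_def L2_set_power2 Re_cinner_analysis_synthesis flip: power2_eq_square)
    also have "\<dots> \<le> cmod (cinner w h)"
      using complex_Re_le_cmod[of "cinner h w"] by (simp add: cinner_commute[of h w])
    also have "\<dots> \<le> (\<epsilon> * sqrt K * norm h) * r"
      using cmod_cinner_synthesis_le[OF bessel_K pert N] by (simp add: w_def r_def mult_ac)
    finally have "r \<le> \<epsilon> * sqrt K * norm h"
      by (rule mult_self_le_mult_imp_le) (simp add: \<epsilon> K)
    then have "r\<^sup>2 \<le> (\<epsilon> * sqrt K * norm h)\<^sup>2"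
      by (simp add: r_def power_mono)
    then show ?thesis using K by (simp add: r_def L2_set_power2 power_mult_distrib)
  qed
  with \<epsilon> K show ?thesis by (simp add: bessel_bounded_def)
qed

end

lemma l2_triangle_infsum:
  fixes \<alpha> \<beta> \<gamma> :: "'i \<Rightarrow> real"
  assumes \<alpha>: "(\<lambda>n. (\<alpha> n)\<^sup>2) summable_on UNIV"
    and \<gamma>_nonneg: "\<And>n. 0 \<le> \<gamma> n" and \<gamma>_le: "\<And>n. \<gamma> n \<le> \<alpha> n + \<beta> n"
    and \<beta>: "\<And>F. finite F \<Longrightarrow> L2_set \<beta> F \<le> E"
  shows "(\<lambda>n. (\<gamma> n)\<^sup>2) summable_on UNIV"
    and "sqrt (\<Sum>\<^sub>\<infinity>n. (\<gamma> n)\<^sup>2) \<le> sqrt (\<Sum>\<^sub>\<infinity>n. (\<alpha> n)\<^sup>2) + E"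
proof -
  define bound where "bound = sqrt (\<Sum>\<^sub>\<infinity>n. (\<alpha> n)\<^sup>2) + E"
  have "0 \<le> E" using \<beta>[of "{}"] by simp
  then have bound_nonneg: "0 \<le> bound" by (simp add: bound_def infsum_nonneg)
  have finite_sums: "(\<Sum>n\<in>F. (\<gamma> n)\<^sup>2) \<le> bound\<^sup>2" if F: "finite F" for F
  proof -
    have "L2_set \<gamma> F \<le> L2_set (\<lambda>n. \<alpha> n + \<beta> n) F"
      using \<gamma>_nonneg \<gamma>_le by (intro L2_set_mono) auto
    also have "\<dots> \<le> L2_set \<alpha> F + L2_set \<beta> F" by (rule L2_set_triangle_ineq)
    also have "L2_set \<alpha> F \<le> sqrt (\<Sum>\<^sub>\<infinity>n. (\<alpha> n)\<^sup>2)"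
      unfolding L2_set_def using \<alpha> F by (intro real_sqrt_le_mono finite_sum_le_infsum) auto
    finally have "L2_set \<gamma> F \<le> bound" using \<beta>[OF F] by (simp add: bound_def)
    then show ?thesis by (simp add: L2_set_power2 [symmetric] power_mono)
  qed
  show summable: "(\<lambda>n. (\<gamma> n)\<^sup>2) summable_on UNIV"
    using finite_sums by (intro nonneg_bdd_above_summable_on bdd_aboveI) auto
  have "(\<Sum>\<^sub>\<infinity>n. (\<gamma> n)\<^sup>2) \<le> bound\<^sup>2"
    using summable finite_sums by (rule infsum_le_finite_sums)
  then show "sqrt (\<Sum>\<^sub>\<infinity>n. (\<gamma> n)\<^sup>2) \<le> sqrt (\<Sum>\<^sub>\<infinity>n. (\<alpha> n)\<^sup>2) + E"
    using bound_nonneg real_sqrt_le_mono by (fastforce simp: bound_def)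
qed

context frame
begin

lemma perturbed_coefficients_bounds:
  assumes pert: "bessel_bounded (\<lambda>n. e n - g n) (R\<^sup>2)" and "0 \<le> R"
  shows "(\<lambda>n. (cmod (cinner h (e n)))\<^sup>2) summable_on UNIV"
    and "(sqrt A - R) * norm h \<le> sqrt (\<Sum>\<^sub>\<infinity>n. (cmod (cinner h (e n)))\<^sup>2)"
    and "sqrt (\<Sum>\<^sub>\<infinity>n. (cmod (cinner h (e n)))\<^sup>2) \<le> (sqrt B + R) * norm h"
proof -
  have diff: "\<And>F. finite F \<Longrightarrow> L2_set (\<lambda>n. cmod (cinner h (e n - g n))) F \<le> R * norm h"
    using L2_set_cinner_le[OF pert] \<open>0 \<le> R\<close> by simp
  have e_le: "cmod (cinner h (e n)) \<le> cmod (cinner h (g n)) + cmod (cinner h (e n - g n))" for n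
    using norm_triangle_ineq[of "cinner h (g n)" "cinner h (e n - g n)"]
    by (simp add: cinner_diff_right)
  have g_le: "cmod (cinner h (g n)) \<le> cmod (cinner h (e n)) + cmod (cinner h (e n - g n))" for n
    using norm_triangle_ineq4[of "cinner h (e n)" "cinner h (e n - g n)"]
    by (simp add: cinner_diff_right)
  note e_l2 = l2_triangle_infsum[OF coefficients_summable norm_ge_zero e_le diff]
  show "(\<lambda>n. (cmod (cinner h (e n)))\<^sup>2) summable_on UNIV" by (rule e_l2(1))
  have "sqrt A * norm h \<le> sqrt (\<Sum>\<^sub>\<infinity>n. (cmod (cinner h (e n)))\<^sup>2) + R * norm h"
    using sqrt_lower_bound[of h] l2_triangle_infsum(2)[OF e_l2(1) norm_ge_zero g_le diff] by simp
  then show "(sqrt A - R) * norm h \<le> sqrt (\<Sum>\<^sub>\<infinity>n. (cmod (cinner h (e n)))\<^sup>2)"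
    by (simp add: algebra_simps)
  show "sqrt (\<Sum>\<^sub>\<infinity>n. (cmod (cinner h (e n)))\<^sup>2) \<le> (sqrt B + R) * norm h"
    using e_l2(2) sqrt_upper_bound[of h] by (simp add: algebra_simps)
qed

end

lemma frame_bounds_perturbation:
  assumes f: "frame_bounds f A B" and pert: "bessel_bounded (\<lambda>n. e n - f n) (R\<^sup>2)"
    and "0 \<le> R" and "R < sqrt A"
  shows "frame_bounds e ((sqrt A - R)\<^sup>2) ((sqrt B + R)\<^sup>2)"
proof -
  interpret frame f A B by (rule frame.intro) (fact f)
  have "sqrt A - R \<le> sqrt B + R" using bounds \<open>0 \<le> R\<close> real_sqrt_le_mono[of A B] by linarith
  then have le: "(sqrt A - R)\<^sup>2 \<le> (sqrt B + R)\<^sup>2"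
    using \<open>R < sqrt A\<close> by (intro power_mono) auto
  have "(sqrt A - R)\<^sup>2 * (norm h)\<^sup>2 \<le> (\<Sum>\<^sub>\<infinity>n. (cmod (cinner h (e n)))\<^sup>2)"
    and "(\<Sum>\<^sub>\<infinity>n. (cmod (cinner h (e n)))\<^sup>2) \<le> (sqrt B + R)\<^sup>2 * (norm h)\<^sup>2" for h
  proof -
    note bounds_h = perturbed_coefficients_bounds[OF pert \<open>0 \<le> R\<close>, of h]
    have nonneg: "0 \<le> (\<Sum>\<^sub>\<infinity>n. (cmod (cinner h (e n)))\<^sup>2)" by (simp add: infsum_nonneg)
    show "(sqrt A - R)\<^sup>2 * (norm h)\<^sup>2 \<le> (\<Sum>\<^sub>\<infinity>n. (cmod (cinner h (e n)))\<^sup>2)"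
      using power_mono[OF bounds_h(2), of 2] \<open>R < sqrt A\<close> nonneg
      by (simp add: power_mult_distrib)
    show "(\<Sum>\<^sub>\<infinity>n. (cmod (cinner h (e n)))\<^sup>2) \<le> (sqrt B + R)\<^sup>2 * (norm h)\<^sup>2"
      using power_mono[OF bounds_h(3), of 2] nonneg
      by (simp add: power_mult_distrib)
  qed
  with le \<open>R < sqrt A\<close> perturbed_coefficients_bounds(1)[OF pert \<open>0 \<le> R\<close>]
  show ?thesis by (simp add: frame_bounds_def)
qed

lemma sqrt_scaled_square:
  assumes "0 < A"
  shows "A * (1 + sqrt (inverse A * K) * x)\<^sup>2 = (sqrt A + sqrt K * x)\<^sup>2"
proof -
  have "sqrt A * sqrt (inverse A * K) = sqrt K"
    using assms by (simp add: real_sqrt_mult [symmetric])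
  then have "sqrt A * (1 + sqrt (inverse A * K) * x) = sqrt A + sqrt K * x"
    by (simp add: algebra_simps)
  then show ?thesis
    using assms by (metis power_mult_distrib real_sqrt_pow2 less_imp_le)
qed

lemma sqrt_mult_less_if_less_inverse_sqrt:
  assumes "0 < A" and "0 < K" and "x < inverse (sqrt (inverse A * K))"
  shows "sqrt K * x < sqrt A"
  using assms by (simp add: real_sqrt_mult real_sqrt_inverse real_sqrt_divide field_simps)

theorem mainTheorem2:
  fixes g f e :: "int \<Rightarrow> 'a::complex_hilbert"
    and s A B \<epsilon> :: real
  assumes separable: "\<exists>D::'a set. countable D \<and> closure D = UNIV"
    and s_pos: "s > 0"
    and g_frame: "is_frame g"
    and g_loc: "self_localized s g"
    and f_frame: "frame_bounds f A B"
    and pert: "schur_norm 0 (gramian (\<lambda>n. e n - f n) (canonical_dual g)) \<le> ennreal \<epsilon>"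
    and eps_pos: "0 < \<epsilon>"
    and eps_small: "\<epsilon> < inverse (sqrt (inverse A * enn2real (schur_norm 0 (gramian g g))))"
  shows "frame_bounds e
           (A * (1 - sqrt (inverse A * enn2real (schur_norm 0 (gramian g g))) * \<epsilon>)\<^sup>2)
           (B * (1 + sqrt (inverse B * enn2real (schur_norm 0 (gramian g g))) * \<epsilon>)\<^sup>2)"
proof -
  define K where "K = enn2real (schur_norm 0 (gramian g g))"
  have A: "0 < A" using f_frame by (simp add: frame_bounds_def)
  have K: "0 < K" using eps_small eps_pos by (auto simp: K_def order_less_le)
  have "bessel_bounded g K"
    using K by (intro bessel_bounded_gramian schur_bounded_if_schur_norm_le)
      (auto simp: K_def ennreal_enn2real_if)
  moreover obtain Ag Bg where "frame_bounds g Ag Bg" using g_frame by (auto simp: is_frame_def)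
  moreover have "schur_bounded (gramian (\<lambda>n. e n - f n) (canonical_dual g)) \<epsilon>"
    using pert eps_pos by (intro schur_bounded_if_schur_norm_le) auto
  ultimately have "bessel_bounded (\<lambda>n. e n - f n) (\<epsilon>\<^sup>2 * K)"
    by (intro frame.bessel_bounded_perturbation) (auto intro: frame.intro)
  then have "frame_bounds e ((sqrt A - sqrt K * \<epsilon>)\<^sup>2) ((sqrt B + sqrt K * \<epsilon>)\<^sup>2)"
    using f_frame eps_pos K sqrt_mult_less_if_less_inverse_sqrt[OF A K] eps_small
    by (intro frame_bounds_perturbation) (auto simp: K_def power_mult_distrib mult.commute)
  then show ?thesis
    using sqrt_scaled_square[of A K "- \<epsilon>"] sqrt_scaled_square[of B K \<epsilon>] A f_frame
    by (simp add: K_def frame_bounds_def)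
qed

end
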